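(* Let $A$ be $\phi_A$-uniformly monotone and $B$ be $\phi_B$-uniformly monotone, let $x\in\operatorname{zer}(A+B)$, and let $(x_n)$, $(y_n)$, $(r_n)$ be generated by the reflected stochastic forward–backward iteration with step sizes $(\gamma_n)$. For every $n\ge 1$ set $$\epsilon_n=2\gamma_n\big(\phi_A(\|x_{n+1}-x\|)+\phi_A(\|x_{n+1}-x_n\|)+\phi_B(\|y_n-x\|)\big).$$ Then, for every $n\ge1$ (pointwise on $\Omega$), $$\|x_{n+1}-x\|^2+\epsilon_n+\Big(3-\frac{\gamma_n}{\gamma_{n-1}}\Big)\|x_{n+1}-x_n\|^2+\frac{\gamma_n}{\gamma_{n-1}}\|x_{n+1}-y_n\|^2+2\gamma_n\langle r_n-Bx,x_{n+1}-x_n\rangle$$ $$\le\|x_n-x\|^2+2\gamma_n\langle r_{n-1}-Bx,x_n-x_{n-1}\rangle+2\gamma_n\langle r_{n-1}-r_n,x_{n+1}-y_n\rangle+\frac{\gamma_n}{\gamma_{n-1}}\|x_n-y_n\|^2+2\gamma_n\langle r_n-By_n,x-y_n\rangle.$$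
   Context: $\mathcal H$ is a separable real Hilbert space with inner product $\langle\cdot,\cdot\rangle$ and norm $\|\cdot\|$; $(\Omega,\mathcal F,\mathsf P)$ is a probability space. $A:\mathcal H\to2^{\mathcal H}$ is maximally monotone and $B:\mathcal H\to\mathcal H$ is monotone and $\mu$-Lipschitz continuous. $\operatorname{zer}(A+B)=\{x:0\in Ax+Bx\}$. For $\gamma>0$, $J_{\gamma A}=(\mathrm{Id}+\gamma A)^{-1}$ is the resolvent. An operator $M$ is $\phi$-uniformly monotone, where $\phi:[0,\infty[\to[0,\infty]$ is increasing with $\phi(0)=0$ (the choice $\phi\equiv0$ corresponding to mere monotonicity), if $\langle x-y,u-v\rangle\ge\phi(\|x-y\|)$ for all $(x,u),(y,v)\in\operatorname{gra}M$. Reflected stochastic forward–backward iteration: $(\gamma_n)_{n\ge -1}$ is a sequence in $]0,+\infty[$, $x_0,x_{-1}$ are square-integrable $\mathcal H$-valued random variables, and for every $n\in\mathbb N$: $y_n=2x_n-x_{n-1}$; $r_n$ is an $\mathcal H$-valued random variable with $\mathsf E[r_n\mid\mathcal F_n]=By_n$, where $\mathcal F_n=\sigma(x_0,\dots,x_n)$; and $x_{n+1}=J_{\gamma_nA}(x_n-\gamma_nr_n)$. *)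

theory Defs
  imports "HOL-Analysis.Analysis" "HOL-Probability.Probability"
begin

text \<open>Set-valued operators on a real Hilbert space are modelled as maps 'a \<Rightarrow> 'a set;
  the graph of A is the set of pairs (x,u) with u \<in> A x.\<close>

definition monotone_op :: "('a::real_inner \<Rightarrow> 'a set) \<Rightarrow> bool" where
  "monotone_op A \<longleftrightarrow> (\<forall>x y u v. u \<in> A x \<longrightarrow> v \<in> A y \<longrightarrow> inner (x - y) (u - v) \<ge> 0)"

definition maximally_monotone :: "('a::real_inner \<Rightarrow> 'a set) \<Rightarrow> bool" where
  "maximally_monotone A \<longleftrightarrow> monotone_op A \<and>
     (\<forall>x u. (\<forall>y v. v \<in> A y \<longrightarrow> inner (x - y) (u - v) \<ge> 0) \<longrightarrow> u \<in> A x)"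

definition admissible_modulus :: "(real \<Rightarrow> ereal) \<Rightarrow> bool" where
  "admissible_modulus \<phi> \<longleftrightarrow> mono_on {0..} \<phi> \<and> \<phi> 0 = 0 \<and> (\<forall>t\<ge>0. \<phi> t \<ge> 0)"

definition uniformly_monotone :: "(real \<Rightarrow> ereal) \<Rightarrow> ('a::real_inner \<Rightarrow> 'a set) \<Rightarrow> bool" where
  "uniformly_monotone \<phi> M \<longleftrightarrow>
     (\<forall>x y u v. u \<in> M x \<longrightarrow> v \<in> M y \<longrightarrow> ereal (inner (x - y) (u - v)) \<ge> \<phi> (norm (x - y)))"

definition zer_sum :: "('a::real_vector \<Rightarrow> 'a set) \<Rightarrow> ('a \<Rightarrow> 'a) \<Rightarrow> 'a set" where
  "zer_sum A B = {x. 0 \<in> (\<lambda>u. u + B x) ` A x}"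

text \<open>Resolvent J_{\<gamma>A} = (Id + \<gamma>A)^{-1}, as the (set-valued) inverse:
  p \<in> resolvent \<gamma> A z iff z \<in> p + \<gamma> A p.\<close>
definition resolvent :: "real \<Rightarrow> ('a::real_vector \<Rightarrow> 'a set) \<Rightarrow> 'a \<Rightarrow> 'a set" where
  "resolvent \<gamma> A z = {p. z \<in> (\<lambda>u. p + \<gamma> *\<^sub>R u) ` A p}"

definition natural_filtration :: "'w measure \<Rightarrow> (int \<Rightarrow> 'w \<Rightarrow> 'a::topological_space) \<Rightarrow> int \<Rightarrow> 'w measure" where
  "natural_filtration M x n =
     sigma (space M) {x k -` U \<inter> space M | k U. 0 \<le> k \<and> k \<le> n \<and> U \<in> sets borel}"

text \<open>E[X | F] = Z (defining property of the conditional expectation of a Bochner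
  integrable Hilbert-space valued random variable).\<close>
definition cond_exp_is :: "'w measure \<Rightarrow> 'w measure \<Rightarrow> ('w \<Rightarrow> 'a::{banach, second_countable_topology})
    \<Rightarrow> ('w \<Rightarrow> 'a) \<Rightarrow> bool" where
  "cond_exp_is M F X Z \<longleftrightarrow> integrable M X \<and> Z \<in> borel_measurable F \<and> integrable M Z \<and>
     (\<forall>S \<in> sets F. (LINT w:S|M. X w) = (LINT w:S|M. Z w))"

end

theory Submission
  imports Defs
begin

(* The resolvent step says that (x_n - gamma_n r_n - x_(n+1)) / gamma_n lies in A x_(n+1), and
   x in zer(A+B) says that -Bx lies in A x.  Uniform monotonicity of A on the pairs (x_(n+1), x),
   (x_(n+1), x_n) and of B on (y_n, x) bounds epsilon_n by 2 gamma_n times the three corresponding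
   inner products.  With these inner products in place of epsilon_n the inequality becomes an
   identity, seen by expanding all squared norms after substituting y_n = 2 x_n - x_(n-1) and
   solving the resolvent steps at n and n-1 for the elements of A. *)

lemma resolventE:
  assumes "p \<in> resolvent \<gamma> A v"
  obtains u where "u \<in> A p" "v = p + \<gamma> *\<^sub>R u"
  using assms unfolding resolvent_def by auto

lemma zer_sumD:
  assumes "z \<in> zer_sum A B"
  shows "- B z \<in> A z"
proof -
  obtain u where "u \<in> A z" "u + B z = 0"
    using assms unfolding zer_sum_def by auto
  then show ?thesis
    by (metis add.commute eq_neg_iff_add_eq_0)
qed

lemma uniformly_monotoneD:
  assumes "uniformly_monotone \<phi> M" "u \<in> M x" "v \<in> M y"
  shows "\<phi> (norm (x - y)) \<le> ereal (inner (x - y) (u - v))"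
  using assms unfolding uniformly_monotone_def by blast

lemma ereal_add_scaled_le:
  fixes e :: ereal
  assumes "0 \<le> g" "e \<le> ereal s"
  shows "ereal c + ereal g * e + ereal d \<le> ereal (c + g * s + d)"
proof -
  have "ereal g * e \<le> ereal g * ereal s"
    using assms by (intro ereal_mult_left_mono) simp_all
  then show ?thesis
    by (metis add_mono order_refl plus_ereal.simps(1) times_ereal.simps(1))
qed

lemma reflected_fb_identity:
  fixes a b p z u u' By Bz r r' :: "'a::real_inner" and g g' :: real
  assumes "g > 0" "g' > 0"
    and step: "a - g *\<^sub>R r = p + g *\<^sub>R u"
    and step': "b - g' *\<^sub>R r' = a + g' *\<^sub>R u'"
  shows "(norm (p - z))\<^sup>2
       + 2 * g * (inner (p - z) (u + Bz) + inner (p - a) (u - u')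
                  + inner (2 *\<^sub>R a - b - z) (By - Bz))
       + ((3 - g / g') * (norm (p - a))\<^sup>2 + g / g' * (norm (p - (2 *\<^sub>R a - b)))\<^sup>2
          + 2 * g * inner (r - Bz) (p - a))
     = (norm (a - z))\<^sup>2 + 2 * g * inner (r' - Bz) (a - b)
       + 2 * g * inner (r' - r) (p - (2 *\<^sub>R a - b))
       + g / g' * (norm (a - (2 *\<^sub>R a - b)))\<^sup>2 + 2 * g * inner (r - By) (z - (2 *\<^sub>R a - b))"
proof -
  have u: "u = (1 / g) *\<^sub>R (a - p) - r"
    using step \<open>g > 0\<close> by (simp add: algebra_simps)
  have u': "u' = (1 / g') *\<^sub>R (b - a) - r'"
    using step' \<open>g' > 0\<close> by (simp add: algebra_simps)
  show ?thesis
    unfolding u u' using assms(1,2)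
    by (simp add: power2_norm_eq_inner inner_diff_left inner_diff_right inner_add_left
        inner_add_right inner_commute field_simps)
qed

lemma reflected_fb_step_inequality:
  fixes A :: "'a::real_inner \<Rightarrow> 'a set" and B :: "'a \<Rightarrow> 'a" and \<phi>A \<phi>B :: "real \<Rightarrow> ereal"
  assumes "g > 0" "g' > 0"
    and A_unif: "uniformly_monotone \<phi>A A" and B_unif: "uniformly_monotone \<phi>B (\<lambda>v. {B v})"
    and zA: "- B z \<in> A z" and u: "u \<in> A p" and u': "u' \<in> A a"
    and step: "a - g *\<^sub>R r = p + g *\<^sub>R u"
    and step': "b - g' *\<^sub>R r' = a + g' *\<^sub>R u'"
    and y: "y = 2 *\<^sub>R a - b"
  shows "ereal ((norm (p - z))\<^sup>2)
         + ereal (2 * g) * (\<phi>A (norm (p - z)) + \<phi>A (norm (p - a)) + \<phi>B (norm (y - z)))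
         + ereal ((3 - g / g') * (norm (p - a))\<^sup>2 + g / g' * (norm (p - y))\<^sup>2
                  + 2 * g * inner (r - B z) (p - a))
       \<le> ereal ((norm (a - z))\<^sup>2 + 2 * g * inner (r' - B z) (a - b)
                + 2 * g * inner (r' - r) (p - y)
                + g / g' * (norm (a - y))\<^sup>2 + 2 * g * inner (r - B y) (z - y))"
proof -
  have "\<phi>A (norm (p - z)) + \<phi>A (norm (p - a)) + \<phi>B (norm (y - z))
      \<le> ereal (inner (p - z) (u + B z) + inner (p - a) (u - u') + inner (y - z) (B y - B z))"
    using uniformly_monotoneD[OF A_unif u zA] uniformly_monotoneD[OF A_unif u u']
      uniformly_monotoneD[OF B_unif, of "B y" y "B z" z]
    by (metis add_mono diff_minus_eq_add insertI1 plus_ereal.simps(1))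
  then show ?thesis
    unfolding y
    by (subst reflected_fb_identity[OF assms(1,2) step step', symmetric])
      (rule ereal_add_scaled_le, use \<open>g > 0\<close> in simp_all)
qed

theorem mainTheorem2:
  fixes M :: "'w measure"
    and A :: "'a::{real_inner, banach, second_countable_topology} \<Rightarrow> 'a set"
    and B :: "'a \<Rightarrow> 'a"
    and \<mu> :: real and \<phi>A \<phi>B :: "real \<Rightarrow> ereal"
    and \<gamma> :: "int \<Rightarrow> real"
    and x y r :: "int \<Rightarrow> 'w \<Rightarrow> 'a"
    and z :: 'a
  assumes P: "prob_space M"
    and A_max: "maximally_monotone A"
    and B_mono: "monotone_op (\<lambda>u. {B u})"
    and B_lip: "\<mu>-lipschitz_on UNIV B"
    and phiA: "admissible_modulus \<phi>A" and A_unif: "uniformly_monotone \<phi>A A"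
    and phiB: "admissible_modulus \<phi>B" and B_unif: "uniformly_monotone \<phi>B (\<lambda>u. {B u})"
    and z_zer: "z \<in> zer_sum A B"
    and gamma_pos: "\<And>n. n \<ge> -1 \<Longrightarrow> \<gamma> n > 0"
    and x0_meas: "x 0 \<in> borel_measurable M" and x0_sq: "integrable M (\<lambda>w. (norm (x 0 w))\<^sup>2)"
    and xm1_meas: "x (-1) \<in> borel_measurable M" and xm1_sq: "integrable M (\<lambda>w. (norm (x (-1) w))\<^sup>2)"
    and y_def: "\<And>n w. n \<ge> 0 \<Longrightarrow> y n w = 2 *\<^sub>R x n w - x (n - 1) w"
    and r_meas: "\<And>n. n \<ge> 0 \<Longrightarrow> r n \<in> borel_measurable M"
    and r_cond: "\<And>n. n \<ge> 0 \<Longrightarrow> cond_exp_is M (natural_filtration M x n) (r n) (\<lambda>w. B (y n w))"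
    and x_step: "\<And>n w. n \<ge> 0 \<Longrightarrow> w \<in> space M \<Longrightarrow>
                   x (n + 1) w \<in> resolvent (\<gamma> n) A (x n w - \<gamma> n *\<^sub>R r n w)"
    and n_ge: "n \<ge> 1"
    and w_in: "w \<in> space M"
  shows "ereal ((norm (x (n + 1) w - z))\<^sup>2)
         + ereal (2 * \<gamma> n) * (\<phi>A (norm (x (n + 1) w - z)) + \<phi>A (norm (x (n + 1) w - x n w))
                               + \<phi>B (norm (y n w - z)))
         + ereal ((3 - \<gamma> n / \<gamma> (n - 1)) * (norm (x (n + 1) w - x n w))\<^sup>2
                  + \<gamma> n / \<gamma> (n - 1) * (norm (x (n + 1) w - y n w))\<^sup>2
                  + 2 * \<gamma> n * inner (r n w - B z) (x (n + 1) w - x n w))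
       \<le> ereal ((norm (x n w - z))\<^sup>2
                + 2 * \<gamma> n * inner (r (n - 1) w - B z) (x n w - x (n - 1) w)
                + 2 * \<gamma> n * inner (r (n - 1) w - r n w) (x (n + 1) w - y n w)
                + \<gamma> n / \<gamma> (n - 1) * (norm (x n w - y n w))\<^sup>2
                + 2 * \<gamma> n * inner (r n w - B (y n w)) (z - y n w))"
proof -
  have g: "\<gamma> n > 0" "\<gamma> (n - 1) > 0"
    using gamma_pos n_ge by auto
  obtain u where u: "u \<in> A (x (n + 1) w)" "x n w - \<gamma> n *\<^sub>R r n w = x (n + 1) w + \<gamma> n *\<^sub>R u"
    using x_step[of n w] n_ge w_in by (auto elim: resolventE)
  obtain u' where u': "u' \<in> A (x n w)"
    "x (n - 1) w - \<gamma> (n - 1) *\<^sub>R r (n - 1) w = x n w + \<gamma> (n - 1) *\<^sub>R u'"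
    using x_step[of "n - 1" w] n_ge w_in by (auto elim: resolventE)
  show ?thesis
    using reflected_fb_step_inequality[OF g A_unif B_unif zer_sumD[OF z_zer] u(1) u'(1) u(2) u'(2)]
      y_def n_ge by simp
qed

end
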